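(* Let $n \geq 2$ and let $\mathbb{F}_q$ be a finite field. Every nonzero element of $\operatorname{Mat}_n(\mathbb{F}_q)$ can be written as a sum of two matrices in $\operatorname{SL}_n(\mathbb{F}_q)$. If $n$ is even or $\operatorname{char}(\mathbb{F}_q) = 2$, then the zero matrix can be written as a sum of two matrices in $\operatorname{SL}_n(\mathbb{F}_q)$; otherwise the zero matrix cannot be written as a sum of two matrices in $\operatorname{SL}_n(\mathbb{F}_q)$ but can be written as a sum of three.
   Context: $\operatorname{SL}_n(\mathbb{F}_q)$ is the set of $n\times n$ matrices over $\mathbb{F}_q$ of determinant $1$. *)

theory Defs
  imports "HOL-Analysis.Analysis"
begin

definition SL :: "('a::comm_ring_1 ^ 'n ^ 'n) set" where
  "SL = {A. det A = 1}"

end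

theory Submission
  imports Defs
begin

text \<open>A matrix with diagonal \<open>d\<close> is a lower triangular matrix with diagonal \<open>b\<close> plus an upper
  triangular one with diagonal \<open>d - b\<close>, and both summands lie in SL as soon as
  \<open>\<Prod> b\<^sub>i = 1 = \<Prod> (d\<^sub>i - b\<^sub>i)\<close>. Being a sum of two SL matrices is invariant under
  multiplication by SL on either side, and transvections bring any nonzero matrix to one whose
  diagonal is arbitrary except for a single zero entry. For that entry zero, \<open>d = 0, b = 1\<close> works
  when \<open>(-1)\<^sup>n = 1\<close>; otherwise \<open>d = (1, 0, 0, \<dots>)\<close> and \<open>b = (1/2, 2, 1, \<dots>)\<close> do. For the zero
  matrix, \<open>B + C = 0\<close> forces \<open>det C = (-1)\<^sup>n det B\<close>, whereas \<open>0 = B + C + I\<close> for any splitting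
  \<open>B + C\<close> of the nonzero matrix \<open>-I\<close>.\<close>

lemma permutes_id_if_rank_le:
  fixes r :: "'n::finite \<Rightarrow> nat"
  assumes "inj r" and p: "p permutes (UNIV :: 'n set)" and le: "\<And>i. r (p i) \<le> r i"
  shows "p = id"
proof -
  have sums_eq: "sum (r \<circ> p) UNIV = sum r UNIV"
    using sum.permute[OF p, of r] by simp
  have "r (p i) = r i" for i
  proof (rule ccontr)
    assume "r (p i) \<noteq> r i"
    with le have "r (p i) < r i"
      using le_neq_implies_less by blast
    then have "sum (r \<circ> p) UNIV < sum r UNIV"
      by (intro sum_strict_mono_ex1) (auto simp: le)
    with sums_eq show False by simp
  qed
  with \<open>inj r\<close> show ?thesis
    by (auto simp: inj_def)
qed

text \<open>Triangularity with respect to an ordering of the index type given by an injective rank;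
  the library's \<open>det_lowerdiagonal\<close> needs a well-ordered index type.\<close>

lemma det_lowertriangular_rank:
  fixes A :: "'a::comm_ring_1^'n^'n" and r :: "'n \<Rightarrow> nat"
  assumes r: "inj r" and lower: "\<And>i j. r i < r j \<Longrightarrow> A$i$j = 0"
  shows "det A = (\<Prod>i\<in>UNIV. A$i$i)"
proof -
  let ?PU = "{p. p permutes (UNIV :: 'n set)}"
  have "of_int (sign p) * (\<Prod>i\<in>UNIV. A$i$p i) = 0" if p: "p \<in> ?PU - {id}" for p
  proof -
    have "\<not> (\<forall>i. r (p i) \<le> r i)"
      using p permutes_id_if_rank_le[OF r, of p] by auto
    then obtain i where "r i < r (p i)"
      by (auto simp: not_le)
    then have "(\<Prod>i\<in>UNIV. A$i$p i) = 0"
      by (intro prod_zero) (auto intro: lower)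
    then show ?thesis
      by simp
  qed
  then have "det A = (\<Sum>p\<in>{id}. of_int (sign p) * (\<Prod>i\<in>UNIV. A$i$p i))"
    unfolding det_def
    by (intro sum.mono_neutral_right) (auto simp: finite_permutations permutes_id)
  then show ?thesis
    by (simp add: sign_id)
qed

lemma det_uppertriangular_rank:
  fixes A :: "'a::comm_ring_1^'n^'n" and r :: "'n \<Rightarrow> nat"
  assumes r: "inj r" and upper: "\<And>i j. r j < r i \<Longrightarrow> A$i$j = 0"
  shows "det A = (\<Prod>i\<in>UNIV. A$i$i)"
proof -
  have "det (transpose A) = (\<Prod>i\<in>UNIV. transpose A $i$i)"
    by (rule det_lowertriangular_rank[OF r]) (simp add: transpose_def upper)
  then show ?thesis
    by (simp only: det_transpose) (simp add: transpose_def)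
qed

lemma ex_rank_least:
  fixes u :: "'n::finite"
  obtains r :: "'n \<Rightarrow> nat" where "inj r" and "\<And>i. i \<noteq> u \<Longrightarrow> r u < r i"
proof -
  obtain r :: "'n \<Rightarrow> nat" where r: "inj r"
    using finite_imp_inj_to_nat_seg[of "UNIV :: 'n set"] by auto
  define r' where "r' i = (if i = u then 0 else Suc (r i))" for i
  have "inj r'"
    using r by (auto simp: inj_def r'_def)
  then show ?thesis
    by (rule that) (simp add: r'_def)
qed

lemma det_uminus: "det (- A) = (-1) ^ CARD('n) * det (A::'a::comm_ring_1^'n^'n)"
proof -
  have "- A = (\<chi> i. (-1) *s A$i)"
    by (simp add: vec_eq_iff)
  then show ?thesis
    using det_rows_mul[of "\<lambda>_. -1" "\<lambda>i. A$i"] by simp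
qed

lemma matrix_add_rdistrib: "(B + C) ** A = B ** A + C ** A"
  by (simp add: matrix_matrix_mult_def vec_eq_iff distrib_right sum.distrib)

definition SL_sum :: "('a::comm_ring_1^'n^'n) \<Rightarrow> bool" where
  "SL_sum A \<longleftrightarrow> (\<exists>B\<in>SL. \<exists>C\<in>SL. A = B + C)"

lemma SL_sum_if_diagonal_splits:
  fixes M :: "'a::comm_ring_1^'n^'n"
  assumes "prod b UNIV = 1" and "(\<Prod>i\<in>UNIV. M$i$i - b i) = 1"
  shows "SL_sum M"
proof -
  obtain r :: "'n \<Rightarrow> nat" where r: "inj r"
    using finite_imp_inj_to_nat_seg[of "UNIV :: 'n set"] by auto
  define B :: "'a^'n^'n" where
    "B = (\<chi> i j. if r j < r i then M$i$j else if i = j then b i else 0)"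
  have "det B = (\<Prod>i\<in>UNIV. B$i$i)"
    by (rule det_lowertriangular_rank[OF r]) (auto simp: B_def)
  then have "B \<in> SL"
    using assms(1) by (simp add: SL_def B_def)
  moreover have "det (M - B) = (\<Prod>i\<in>UNIV. (M - B)$i$i)"
    by (rule det_uppertriangular_rank[OF r]) (auto simp: B_def)
  then have "M - B \<in> SL"
    using assms(2) by (simp add: SL_def B_def)
  ultimately show ?thesis
    unfolding SL_sum_def by (intro bexI[of _ B] bexI[of _ "M - B"]) auto
qed

lemma SL_sum_mult:
  fixes A P Q :: "'a::comm_ring_1^'n^'n"
  assumes "SL_sum A" and "det P = 1" and "det Q = 1"
  shows "SL_sum (P ** A ** Q)"
proof -
  obtain B C where "B \<in> SL" "C \<in> SL" and "A = B + C"
    using assms(1) unfolding SL_sum_def by blast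
  then have "P ** A ** Q = P ** B ** Q + P ** C ** Q"
    by (simp add: matrix_add_ldistrib matrix_add_rdistrib)
  with \<open>B \<in> SL\<close> \<open>C \<in> SL\<close> show ?thesis
    using assms(2,3) unfolding SL_sum_def SL_def
    by (intro bexI[of _ "P ** B ** Q"] bexI[of _ "P ** C ** Q"]) (auto simp: det_mul)
qed

lemma SL_sum_mult_iff:
  fixes A P Q :: "'a::field^'n^'n"
  assumes dP: "det P = 1" and dQ: "det Q = 1"
  shows "SL_sum (P ** A ** Q) \<longleftrightarrow> SL_sum A"
proof
  obtain P' where P': "P ** P' = mat 1" "P' ** P = mat 1"
    using dP invertible_det_nz[of P] unfolding invertible_def by auto
  obtain Q' where Q': "Q ** Q' = mat 1" "Q' ** Q = mat 1"
    using dQ invertible_det_nz[of Q] unfolding invertible_def by auto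
  have "det P' = 1" "det Q' = 1"
    using det_mul[of P P'] det_mul[of Q Q'] P' Q' dP dQ by simp_all
  moreover assume "SL_sum (P ** A ** Q)"
  ultimately have "SL_sum (P' ** (P ** A ** Q) ** Q')"
    by (rule_tac SL_sum_mult)
  moreover have "P' ** (P ** A ** Q) ** Q' = (P' ** P) ** A ** (Q ** Q')"
    by (simp add: matrix_mul_assoc)
  ultimately show "SL_sum A"
    by (simp add: P'(2) Q'(1))
qed (simp add: SL_sum_mult dP dQ)

definition row_addition_matrix :: "'n \<Rightarrow> ('n \<Rightarrow> 'a::comm_ring_1) \<Rightarrow> 'a^'n^'n" where
  "row_addition_matrix u x = (\<chi> i j. (if i = j then 1 else 0) + (if j = u \<and> i \<noteq> u then x i else 0))"

definition column_addition_matrix :: "'n \<Rightarrow> ('n \<Rightarrow> 'a::comm_ring_1) \<Rightarrow> 'a^'n^'n" where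
  "column_addition_matrix v y = (\<chi> i j. (if i = j then 1 else 0) + (if i = v \<and> j \<noteq> v then y j else 0))"

lemma det_row_addition_matrix [simp]:
  "det (row_addition_matrix u x :: 'a::comm_ring_1^'n::finite^'n) = 1"
proof -
  obtain r :: "'n \<Rightarrow> nat" where "inj r" and least: "\<And>i. i \<noteq> u \<Longrightarrow> r u < r i"
    using ex_rank_least[of u] by blast
  then have "det (row_addition_matrix u x) = (\<Prod>i\<in>UNIV. row_addition_matrix u x $i$i)"
    by (intro det_lowertriangular_rank) (auto simp: row_addition_matrix_def dest: least)
  then show ?thesis
    by (simp add: row_addition_matrix_def)
qed

lemma det_column_addition_matrix [simp]:
  "det (column_addition_matrix v y :: 'a::comm_ring_1^'n::finite^'n) = 1"
proof -
  obtain r :: "'n \<Rightarrow> nat" where "inj r" and least: "\<And>i. i \<noteq> v \<Longrightarrow> r v < r i"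
    using ex_rank_least[of v] by blast
  then have "det (column_addition_matrix v y) = (\<Prod>i\<in>UNIV. column_addition_matrix v y $i$i)"
    by (intro det_uppertriangular_rank) (auto simp: column_addition_matrix_def dest: least[OF not_sym])
  then show ?thesis
    by (simp add: column_addition_matrix_def)
qed

lemma row_addition_matrix_mult:
  "(row_addition_matrix u x ** A)$i$j = (if i = u then A$u$j else A$i$j + x i * A$u$j)"
  by (cases "i = u")
     (auto simp: row_addition_matrix_def matrix_matrix_mult_def distrib_right sum.distrib
        if_distrib[where f = "\<lambda>c. c * _"] sum.delta cong: if_cong)

lemma column_addition_matrix_mult:
  "(A ** column_addition_matrix v y)$i$j = A$i$j + (if j \<noteq> v then A$i$v * y j else 0)"
  by (cases "j = v")
     (auto simp: column_addition_matrix_def matrix_matrix_mult_def distrib_left sum.distrib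
        if_distrib[where f = "\<lambda>c. _ * c"] sum.delta' cong: if_cong)

lemma diagonal_prescribable:
  fixes A :: "'a::field^'n^'n"
  assumes uv: "u \<noteq> v" and Auv: "A$u$v \<noteq> 0" and dv: "d v = 0"
  obtains P Q where "det P = 1" and "det Q = 1" and "\<And>j. (P ** A ** Q)$j$j = d j"
proof -
  text \<open>Adding multiples of row \<open>u\<close> makes column \<open>v\<close> vanish at \<open>v\<close> only; then adding a multiple
    of column \<open>v\<close> to each other column \<open>j\<close> adjusts the diagonal entry \<open>j\<close> freely.\<close>
  define x where "x i = (if i = v then - A$v$v / A$u$v else (1 - A$i$v) / A$u$v)" for i
  define A' where "A' = row_addition_matrix u x ** A"
  have A'vv: "A'$v$v = 0"
    using uv Auv by (simp add: A'_def row_addition_matrix_mult x_def)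
  have A'jv: "A'$j$v \<noteq> 0" if "j \<noteq> v" for j
    using uv Auv that by (cases "j = u") (auto simp: A'_def row_addition_matrix_mult x_def)
  define y where "y j = (d j - A'$j$j) / A'$j$v" for j
  have "(A' ** column_addition_matrix v y)$j$j = d j" for j
    using A'vv A'jv[of j] dv by (cases "j = v") (auto simp: column_addition_matrix_mult y_def)
  then show ?thesis
    by (intro that[of "row_addition_matrix u x" "column_addition_matrix v y"]) (simp_all add: A'_def)
qed

lemma ex_diagonal_split:
  fixes u v :: "'n::finite"
  assumes uv: "u \<noteq> v"
  obtains d b :: "'n \<Rightarrow> 'a::field"
  where "d v = 0" and "prod b UNIV = 1" and "(\<Prod>i\<in>UNIV. d i - b i) = 1"
proof (cases "(-1::'a) ^ CARD('n) = 1")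
  case True
  then show ?thesis
    by (intro that[of "\<lambda>_. 0" "\<lambda>_. 1"]) simp_all
next
  case False
  then have odd: "odd CARD('n)"
    by auto
  have "(-1::'a) \<noteq> 1"
    using False by (metis power_one)
  then have two: "(2::'a) \<noteq> 0"
    by (metis add_eq_0_iff one_add_one)
  define d where "d i = (if i = u then (1::'a) else 0)" for i
  define b where "b i = (if i = u then 1/2 else if i = v then (2::'a) else 1)" for i
  let ?R = "UNIV - {u} - {v}"
  have split: "prod f UNIV = f u * f v * prod f ?R" for f :: "'n \<Rightarrow> 'a"
    using prod.remove[of UNIV u f] prod.remove[of "UNIV - {u}" v f] uv by (simp add: mult.assoc)
  have "card ?R = CARD('n) - 2"
    using uv by (simp add: card_Diff_singleton_if)
  moreover have "odd (CARD('n) - 2)"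
  proof -
    have "card {u, v} \<le> CARD('n)"
      by (rule card_mono) auto
    with odd uv show ?thesis
      by simp
  qed
  ultimately have "(\<Prod>i\<in>?R. d i - b i) = -1"
    using uv by (simp add: b_def d_def)
  then have "(\<Prod>i\<in>UNIV. d i - b i) = 1"
    using split[of "\<lambda>i. d i - b i"] uv two by (simp add: b_def d_def field_simps)
  moreover have "prod b UNIV = 1"
    using split[of b] uv two by (simp add: b_def)
  ultimately show ?thesis
    by (intro that[of d b]) (simp_all add: d_def uv[symmetric])
qed

lemma SL_sum_if_off_diagonal_nonzero:
  fixes A :: "'a::field^'n^'n"
  assumes "u \<noteq> v" and "A$u$v \<noteq> 0"
  shows "SL_sum A"
proof -
  obtain d b :: "'n \<Rightarrow> 'a" where "d v = 0" and b: "prod b UNIV = 1" "(\<Prod>i\<in>UNIV. d i - b i) = 1"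
    using ex_diagonal_split[OF assms(1)] by blast
  obtain P Q where "det P = 1" "det Q = 1" and diag: "\<And>j. (P ** A ** Q)$j$j = d j"
    using diagonal_prescribable[of u v A d] assms \<open>d v = 0\<close> by blast
  have "SL_sum (P ** A ** Q)"
    by (rule SL_sum_if_diagonal_splits[OF b(1)]) (simp add: diag b(2))
  with \<open>det P = 1\<close> \<open>det Q = 1\<close> show ?thesis
    by (simp add: SL_sum_mult_iff)
qed

lemma SL_sum_if_nonzero:
  fixes A :: "'a::field^'n^'n"
  assumes n2: "CARD('n) \<ge> 2" and "A \<noteq> 0"
  shows "SL_sum A"
proof -
  obtain i j where ij: "A$i$j \<noteq> 0"
    using \<open>A \<noteq> 0\<close> by (metis vec_eq_iff zero_index)
  obtain v :: 'n where v: "v \<noteq> i"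
  proof -
    have "card (UNIV :: 'n set) \<noteq> card {i}"
      using n2 by simp
    then show ?thesis
      using that by (metis UNIV_eq_I singleton_iff)
  qed
  show ?thesis
  proof (cases "\<exists>u w. u \<noteq> w \<and> A$u$w \<noteq> 0")
    case True
    then obtain u w where "u \<noteq> w" and "A$u$w \<noteq> 0"
      by blast
    then show ?thesis
      by (rule SL_sum_if_off_diagonal_nonzero)
  next
    case False
    then have off: "A$u$w = 0" if "u \<noteq> w" for u w
      using that by blast
    with ij have "A$i$i \<noteq> 0"
      by metis
    have "A$v$i = 0"
      using off v by simp
    define R :: "'a^'n^'n" where "R = row_addition_matrix i (\<lambda>k. if k = v then 1 else 0)"
    have "(R ** A)$v$i \<noteq> 0"
      using v \<open>A$i$i \<noteq> 0\<close> \<open>A$v$i = 0\<close> by (simp add: R_def row_addition_matrix_mult)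
    then have "SL_sum (R ** A)"
      by (rule SL_sum_if_off_diagonal_nonzero[OF v])
    then show ?thesis
      using SL_sum_mult_iff[of R "mat 1" A] by (simp add: R_def)
  qed
qed

lemma neg_one_power_eq_one_iff: "(-1::'a::idom) ^ n = 1 \<longleftrightarrow> even n \<or> CHAR('a) = 2"
proof -
  have "(-1::'a) = 1 \<longleftrightarrow> CHAR('a) = 2"
  proof
    assume "(-1::'a) = 1"
    then have "of_nat 2 = (0::'a)"
      by (metis add_eq_0_iff of_nat_numeral one_add_one)
    then show "CHAR('a) = 2"
      by (intro CHAR_eq_posI) (auto simp: less_2_cases_iff)
  next
    assume "CHAR('a) = 2"
    then show "(-1::'a) = 1"
      by (rule uminus_CHAR_2)
  qed
  then show ?thesis
    by (cases "even n") auto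
qed

lemma SL_sum_zero_iff: "SL_sum (0 :: 'a::comm_ring_1^'n^'n) \<longleftrightarrow> (-1::'a) ^ CARD('n) = 1"
proof
  assume "SL_sum (0 :: 'a^'n^'n)"
  then obtain B C :: "'a^'n^'n" where "det B = 1" "det C = 1" and "0 = B + C"
    unfolding SL_sum_def SL_def by blast
  then have "C = - B"
    by (simp add: eq_neg_iff_add_eq_0 add.commute)
  with \<open>det B = 1\<close> \<open>det C = 1\<close> show "(-1::'a) ^ CARD('n) = 1"
    by (simp add: det_uminus)
next
  assume "(-1::'a) ^ CARD('n) = 1"
  then show "SL_sum (0 :: 'a^'n^'n)"
    unfolding SL_sum_def SL_def
    by (intro bexI[of _ "mat 1"] bexI[of _ "- mat 1"]) (simp_all add: det_uminus)
qed

theorem theorem3p10: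
  assumes "CARD('n) \<ge> 2"
  shows "(\<forall>A :: 'a::{field,finite} ^ 'n ^ 'n. A \<noteq> 0 \<longrightarrow> (\<exists>B\<in>SL. \<exists>C\<in>SL. A = B + C))
    \<and> ((even CARD('n) \<or> CHAR('a) = 2) \<longrightarrow>
         (\<exists>B\<in>SL. \<exists>C\<in>SL. (0 :: 'a::{field,finite} ^ 'n ^ 'n) = B + C))
    \<and> (\<not> (even CARD('n) \<or> CHAR('a) = 2) \<longrightarrow>
         \<not> (\<exists>B\<in>SL. \<exists>C\<in>SL. (0 :: 'a::{field,finite} ^ 'n ^ 'n) = B + C)
         \<and> (\<exists>B\<in>SL. \<exists>C\<in>SL. \<exists>D\<in>SL. (0 :: 'a::{field,finite} ^ 'n ^ 'n) = B + C + D))"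
proof -
  have nonzero: "SL_sum A" if "A \<noteq> 0" for A :: "'a ^ 'n ^ 'n"
    using SL_sum_if_nonzero[OF assms that] .
  have zero: "SL_sum (0 :: 'a ^ 'n ^ 'n) \<longleftrightarrow> even CARD('n) \<or> CHAR('a) = 2"
    by (simp add: SL_sum_zero_iff neg_one_power_eq_one_iff)
  have "(- mat 1 :: 'a ^ 'n ^ 'n) \<noteq> 0"
    by (simp add: vec_eq_iff mat_def)
  then obtain B C :: "'a ^ 'n ^ 'n" where "B \<in> SL" "C \<in> SL" and "- mat 1 = B + C"
    using nonzero unfolding SL_sum_def by blast
  then have "0 = B + C + mat 1" and "(mat 1 :: 'a ^ 'n ^ 'n) \<in> SL"
    by (simp_all add: SL_def flip: \<open>- mat 1 = B + C\<close>)
  with \<open>B \<in> SL\<close> \<open>C \<in> SL\<close> have three: "\<exists>B\<in>SL. \<exists>C\<in>SL. \<exists>D\<in>SL. (0 :: 'a ^ 'n ^ 'n) = B + C + D"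
    by blast
  show ?thesis
    unfolding SL_sum_def[symmetric] using nonzero zero three by auto
qed

end
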